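(* Let $\mathcal C\subseteq\mathbf F_q^n$ be a formally self-orthogonal nonzero linear $[n,k,d]$ code with $2d\le n+1$. Write $p_i=\dim\mathcal P_i$ and $f_i=\dim\mathcal F_i$. Then for all $0\le i\le j\le n$, $$(p_j-p_i)+(f_i-f_j)\le j-i.$$ As a consequence, $\Delta[\mathcal C]\le\lfloor (n-2d+2)/2\rfloor$.
   Context: The coordinate order is fixed. Define $\mathcal P_0=\mathcal F_n=0$, $\mathcal P_n=\mathcal F_0=\mathcal C$, and for $1\le i\le n-1$, $\mathcal P_i=\{(c_1,\dots,c_i):(c_1,\dots,c_i,0,\dots,0)\in\mathcal C\}$ and $\mathcal F_i=\{(c_{i+1},\dots,c_n):(0,\dots,0,c_{i+1},\dots,c_n)\in\mathcal C\}$. $\mathcal C$ is formally self-orthogonal if there is an $n$-tuple $\mathbf x$ of nonzero elements of $\mathbf F_q$ with $\mathcal C\subseteq\mathbf x*\mathcal C^\perp$, where $*$ is coordinate-wise multiplication. Set $\Delta_i=p_i+f_i$ and $\Delta(\mathcal C)=\min_{0\le i\le n}\Delta_i$. Then $\Delta[\mathcal C]$ is the maximum of $\Delta(\mathcal C')$ over all codes $\mathcal C'$ obtained from $\mathcal C$ by permuting coordinates. *)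

theory Defs
  imports Complex_Main "HOL-Library.Function_Algebras" "HOL-Combinatorics.Permutations"
begin

text \<open>Words of length n over a finite field 'a are modelled as functions
  nat => 'a vanishing outside the coordinate set {0..<n} (coordinate c_(i+1) of
  the paper is c i here).\<close>

definition cscale :: "'a::field \<Rightarrow> (nat \<Rightarrow> 'a) \<Rightarrow> (nat \<Rightarrow> 'a)" where
  "cscale c v = (\<lambda>i. c * v i)"

global_interpretation fvec: vector_space "cscale :: 'a::field \<Rightarrow> (nat \<Rightarrow> 'a) \<Rightarrow> (nat \<Rightarrow> 'a)"
  by unfold_locales (auto simp: cscale_def algebra_simps)

definition words :: "nat \<Rightarrow> (nat \<Rightarrow> 'a::zero) set" where
  "words n = {v. \<forall>i\<ge>n. v i = 0}"

definition linear_code :: "nat \<Rightarrow> (nat \<Rightarrow> 'a::field) set \<Rightarrow> bool" where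
  "linear_code n C \<longleftrightarrow> C \<subseteq> words n \<and> fvec.subspace C"

definition cdim :: "(nat \<Rightarrow> 'a::field) set \<Rightarrow> nat" where
  "cdim C = fvec.dim C"

definition weight :: "nat \<Rightarrow> (nat \<Rightarrow> 'a::zero) \<Rightarrow> nat" where
  "weight n c = card {i. i < n \<and> c i \<noteq> 0}"

definition min_dist :: "nat \<Rightarrow> (nat \<Rightarrow> 'a::zero) set \<Rightarrow> nat" where
  "min_dist n C = Min {weight n c | c. c \<in> C \<and> c \<noteq> 0}"

definition dual_code :: "nat \<Rightarrow> (nat \<Rightarrow> 'a::field) set \<Rightarrow> (nat \<Rightarrow> 'a) set" where
  "dual_code n C = {v \<in> words n. \<forall>c\<in>C. (\<Sum>i<n. v i * c i) = 0}"

definition formally_self_orthogonal :: "nat \<Rightarrow> (nat \<Rightarrow> 'a::field) set \<Rightarrow> bool" where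
  "formally_self_orthogonal n C \<longleftrightarrow>
     (\<exists>x::nat \<Rightarrow> 'a. (\<forall>i<n. x i \<noteq> 0) \<and>
        C \<subseteq> (\<lambda>v. (\<lambda>i. x i * v i)) ` dual_code n C)"

definition prefix_code :: "nat \<Rightarrow> (nat \<Rightarrow> 'a::zero) set \<Rightarrow> nat \<Rightarrow> (nat \<Rightarrow> 'a) set" where
  "prefix_code n C i = {c. c \<in> C \<and> (\<forall>j. i \<le> j \<longrightarrow> c j = 0)}"

definition suffix_code :: "nat \<Rightarrow> (nat \<Rightarrow> 'a::zero) set \<Rightarrow> nat \<Rightarrow> (nat \<Rightarrow> 'a) set" where
  "suffix_code n C i = (\<lambda>c. (\<lambda>j. c (j + i))) ` {c. c \<in> C \<and> (\<forall>j<i. c j = 0)}"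

definition p_dim :: "nat \<Rightarrow> (nat \<Rightarrow> 'a::field) set \<Rightarrow> nat \<Rightarrow> nat" where
  "p_dim n C i = cdim (prefix_code n C i)"

definition f_dim :: "nat \<Rightarrow> (nat \<Rightarrow> 'a::field) set \<Rightarrow> nat \<Rightarrow> nat" where
  "f_dim n C i = cdim (suffix_code n C i)"

definition Delta :: "nat \<Rightarrow> (nat \<Rightarrow> 'a::field) set \<Rightarrow> nat" where
  "Delta n C = Min {p_dim n C i + f_dim n C i | i. i \<le> n}"

definition permute_code :: "(nat \<Rightarrow> nat) \<Rightarrow> (nat \<Rightarrow> 'a) set \<Rightarrow> (nat \<Rightarrow> 'a) set" where
  "permute_code \<sigma> C = (\<lambda>c. c \<circ> \<sigma>) ` C"

definition Delta_perm :: "nat \<Rightarrow> (nat \<Rightarrow> 'a::field) set \<Rightarrow> nat" where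
  "Delta_perm n C = Max {Delta n (permute_code \<sigma> C) | \<sigma>. \<sigma> permutes {0..<n}}"

end

theory Submission
  imports Defs "HOL-Library.Cardinality"
begin

(* Formal self-orthogonality gives nonzero weights y with
   sum_l a_l b_l y_l = 0 for all codewords a, b.  For i <= j let pi keep the
   coordinates i, ..., j-1.  On P_j the kernel of pi is P_i, and on the codewords
   vanishing below i it is the set of codewords vanishing below j.  The two images
   are orthogonal for the nondegenerate diagonal form with weights y on j - i
   coordinates, so the product of their sizes is at most q^(j-i); comparing sizes
   gives q^(p_j + f_i) <= q^(p_i + f_j + (j - i)).
   Minimum distance d forces p_(d-1) = 0 and f_(n+1-d) = 0, so the two bounds
   Delta <= f_(d-1) and Delta <= p_(n+1-d) add up to at most (n+1-d) - (d-1) by the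
   first part.  All hypotheses are invariant under permuting the coordinates. *)

lemma finite_words: "finite (words n :: (nat \<Rightarrow> 'a::{zero,finite}) set)"
proof (rule finite_imageD)
  show "inj_on (\<lambda>v. restrict v {..<n}) (words n)"
  proof (rule inj_onI, rule ext)
    fix u v l assume "u \<in> words n" "v \<in> words n" "restrict u {..<n} = restrict v {..<n}"
    then show "u l = v l"
      by (cases "l < n") (auto simp: words_def dest: fun_cong[where x = l])
  qed
  have "(\<lambda>v. restrict v {..<n}) ` (words n :: (nat \<Rightarrow> 'a) set) \<subseteq> {..<n} \<rightarrow>\<^sub>E UNIV"
    by (simp add: image_subset_iff restrict_PiE_iff)
  then show "finite ((\<lambda>v. restrict v {..<n}) ` (words n :: (nat \<Rightarrow> 'a) set))"
    by (rule finite_subset) (simp add: finite_PiE)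
qed

lemma finite_linear_code:
  fixes C :: "(nat \<Rightarrow> 'a::{field,finite}) set"
  shows "linear_code n C \<Longrightarrow> finite C"
  unfolding linear_code_def using finite_words finite_subset by blast

lemma card_span_independent:
  fixes B :: "(nat \<Rightarrow> 'a::{field,finite}) set"
  assumes fin: "finite B" and indep: "fvec.independent B"
  shows "card (fvec.span B) = CARD('a) ^ card B"
proof -
  define comb where "comb u = (\<Sum>v\<in>B. cscale (u v) v)" for u :: "(nat \<Rightarrow> 'a) \<Rightarrow> 'a"
  have comb_diff: "comb u - comb u' = comb (\<lambda>v. u v - u' v)" for u u'
    by (simp add: comb_def fvec.scale_left_diff_distrib sum_subtractf)
  have "fvec.span B = range comb"
    using fin by (simp add: fvec.span_finite comb_def)
  also have "\<dots> = comb ` (B \<rightarrow>\<^sub>E UNIV)"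
  proof
    show "range comb \<subseteq> comb ` (B \<rightarrow>\<^sub>E UNIV)"
    proof clarify
      fix u
      have "comb u = comb (restrict u B)" by (simp add: comb_def)
      then show "comb u \<in> comb ` (B \<rightarrow>\<^sub>E UNIV)" by auto
    qed
  qed auto
  finally have span_eq: "fvec.span B = comb ` (B \<rightarrow>\<^sub>E UNIV)" .
  have "inj_on comb (B \<rightarrow>\<^sub>E UNIV)"
  proof (rule inj_onI)
    fix u u' assume u: "u \<in> B \<rightarrow>\<^sub>E UNIV" and u': "u' \<in> B \<rightarrow>\<^sub>E UNIV"
      and "comb u = comb u'"
    then have "comb (\<lambda>v. u v - u' v) = 0" by (simp flip: comb_diff)
    moreover have "\<forall>v\<in>B. w v = 0" if "comb w = 0" for w
      using that indep unfolding fvec.dependent_finite[OF fin] comb_def by blast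
    ultimately have "\<forall>v\<in>B. u v - u' v = 0" by blast
    then show "u = u'" using u u' by (auto intro: PiE_ext)
  qed
  then have "card (fvec.span B) = card (B \<rightarrow>\<^sub>E (UNIV :: 'a set))"
    by (simp add: span_eq card_image)
  also have "\<dots> = CARD('a) ^ card B"
    using fin by (simp add: card_PiE)
  finally show ?thesis .
qed

lemma card_subspace:
  fixes S :: "(nat \<Rightarrow> 'a::{field,finite}) set"
  assumes "fvec.subspace S" "finite S"
  shows "card S = CARD('a) ^ fvec.dim S"
proof -
  obtain B where B: "B \<subseteq> S" "fvec.independent B" "S \<subseteq> fvec.span B" "card B = fvec.dim S"
    using fvec.basis_exists by blast
  then have "fvec.span B = S"
    using assms(1) fvec.span_subspace by blast
  moreover have "finite B"
    using B(1) assms(2) by (rule finite_subset)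
  ultimately show ?thesis
    using card_span_independent[of B] B by simp
qed

lemma card_field_ge_2: "2 \<le> CARD('a::{field,finite})"
proof -
  have "card {0::'a, 1} \<le> CARD('a)" by (rule card_mono) simp_all
  then show ?thesis by simp
qed

lemma card_eq_card_kernel_mult_card_image:
  fixes f :: "'b::ab_group_add \<Rightarrow> 'c::ab_group_add"
  assumes fin: "finite S" and S0: "0 \<in> S" and S_diff: "\<And>x y. x \<in> S \<Longrightarrow> y \<in> S \<Longrightarrow> x - y \<in> S"
    and f_diff: "\<And>x y. f (x - y) = f x - f y"
  shows "card S = card {v\<in>S. f v = 0} * card (f ` S)"
proof -
  define K where "K = {v\<in>S. f v = 0}"
  have f_add: "f (x + y) = f x + f y" for x y
    using f_diff[of x "0 - y"] f_diff[of 0 y] f_diff[of 0 0] by simp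
  have S_add: "x + y \<in> S" if "x \<in> S" "y \<in> S" for x y
    using S_diff[OF that(1) S_diff[OF S0 that(2)]] by simp
  have fiber: "{v\<in>S. f v = f s} = (+) s ` K" if "s \<in> S" for s
  proof
    show "{v\<in>S. f v = f s} \<subseteq> (+) s ` K"
    proof clarify
      fix v assume "v \<in> S" "f v = f s"
      then have "v - s \<in> K" using that S_diff f_diff by (simp add: K_def)
      then show "v \<in> (+) s ` K" by (rule rev_image_eqI) simp
    qed
    show "(+) s ` K \<subseteq> {v\<in>S. f v = f s}"
      using that S_add f_add by (auto simp: K_def)
  qed
  have "card S = card (\<Union>z\<in>f ` S. {v\<in>S. f v = z})"
    by (rule arg_cong[where f = card]) blast
  also have "\<dots> = (\<Sum>z\<in>f ` S. card {v\<in>S. f v = z})"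
    using fin by (intro card_UN_disjoint) auto
  also have "\<dots> = (\<Sum>z\<in>f ` S. card K)"
  proof (rule sum.cong[OF refl])
    fix z assume "z \<in> f ` S"
    then obtain s where "s \<in> S" "z = f s" by blast
    then show "card {v\<in>S. f v = z} = card K"
      using fiber by (simp add: card_image)
  qed
  finally show ?thesis by (simp add: K_def)
qed

definition keep_coords :: "nat set \<Rightarrow> (nat \<Rightarrow> 'a::zero) \<Rightarrow> (nat \<Rightarrow> 'a)" where
  "keep_coords A v = (\<lambda>l. if l \<in> A then v l else 0)"

lemma keep_coords_diff:
  fixes u v :: "nat \<Rightarrow> 'a::ab_group_add"
  shows "keep_coords A (u - v) = keep_coords A u - keep_coords A v"
  by (simp add: keep_coords_def fun_eq_iff)

lemma subspace_linear_image:
  assumes "fvec.subspace S" "\<And>a b. g (a + b) = g a + g b" "\<And>c a. g (cscale c a) = cscale c (g a)"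
  shows "fvec.subspace (g ` S)"
  by (rule module_hom.subspace_image[OF _ assms(1)])
     (simp add: module_hom_iff assms fvec.module_axioms)

lemma subspace_keep_coords_image: "fvec.subspace S \<Longrightarrow> fvec.subspace (keep_coords A ` S)"
  by (rule subspace_linear_image) (auto simp: keep_coords_def cscale_def fun_eq_iff)

lemma subspace_vanishing_on: "fvec.subspace S \<Longrightarrow> fvec.subspace {v\<in>S. \<forall>l. P l \<longrightarrow> v l = 0}"
  unfolding fvec.subspace_def by (auto simp: cscale_def)

lemma keep_coords_eq_0_iff: "keep_coords A v = 0 \<longleftrightarrow> (\<forall>l\<in>A. v l = 0)"
  by (auto simp: keep_coords_def fun_eq_iff)

lemma card_point_supported_mult_card_coord_image_le:
  fixes y :: "nat \<Rightarrow> 'a::{field,finite}"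
  assumes "finite I" "m \<in> I" "y m \<noteq> 0"
    and orth: "\<forall>u\<in>U. \<forall>w\<in>W. (\<Sum>l\<in>I. u l * w l * y l) = 0"
  shows "card {u\<in>U. \<forall>l. l \<noteq> m \<longrightarrow> u l = 0} * card ((\<lambda>w. w m) ` W) \<le> CARD('a)"
proof -
  define K where "K = {u\<in>U. \<forall>l. l \<noteq> m \<longrightarrow> u l = 0}"
  have "inj_on (\<lambda>u. u m) K"
  proof (rule inj_onI, rule ext)
    fix u v l assume "u \<in> K" "v \<in> K" "u m = v m"
    then show "u l = v l" by (cases "l = m") (simp_all add: K_def)
  qed
  then have card_K: "card K \<le> CARD('a)"
    using card_mono[of UNIV "(\<lambda>u. u m) ` K"] by (simp add: card_image)
  have card_coord_image: "card ((\<lambda>w. w m) ` W) \<le> CARD('a)"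
    by (rule card_mono) simp_all
  txt \<open>A nonzero element of K is supported on m alone, so orthogonality to it
    forces every element of W to vanish at m.\<close>
  have "K \<subseteq> {0} \<or> (\<lambda>w. w m) ` W \<subseteq> {0}"
  proof (cases "\<exists>w\<in>W. w m \<noteq> 0")
    case True
    then obtain w where w: "w \<in> W" "w m \<noteq> 0" by blast
    have "u = 0" if u: "u \<in> K" for u
    proof (rule ext)
      fix l
      have "(\<Sum>l\<in>I. u l * w l * y l) = (\<Sum>l\<in>{m}. u l * w l * y l)"
        using assms(1,2) u by (intro sum.mono_neutral_right) (auto simp: K_def)
      then have "u m = 0"
        using orth u w assms(3) by (auto simp: K_def)
      then show "u l = 0 l"
        using u by (cases "l = m") (simp_all add: K_def)
    qed
    then show ?thesis by blast
  qed auto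
  then have "card K \<le> 1 \<or> card ((\<lambda>w. w m) ` W) \<le> 1"
    using card_mono[of "{0 :: nat \<Rightarrow> 'a}" K] card_mono[of "{0 :: 'a}" "(\<lambda>w. w m) ` W"] by auto
  then show ?thesis
  proof
    assume "card K \<le> 1"
    from mult_le_mono[OF this card_coord_image] show ?thesis by (simp add: K_def)
  next
    assume "card ((\<lambda>w. w m) ` W) \<le> 1"
    from mult_le_mono[OF card_K this] show ?thesis by (simp add: K_def)
  qed
qed

lemma card_orthogonal_subspaces_le:
  fixes y :: "nat \<Rightarrow> 'a::{field,finite}"
  assumes "finite I" and "\<forall>l\<in>I. y l \<noteq> 0"
    and "fvec.subspace U" "fvec.subspace W" "finite U" "finite W"
    and "\<forall>u\<in>U. \<forall>l. l \<notin> I \<longrightarrow> u l = 0" "\<forall>w\<in>W. \<forall>l. l \<notin> I \<longrightarrow> w l = 0"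
    and "\<forall>u\<in>U. \<forall>w\<in>W. (\<Sum>l\<in>I. u l * w l * y l) = 0"
  shows "card U * card W \<le> CARD('a) ^ card I"
  using assms
proof (induction I arbitrary: U W rule: finite_induct)
  case empty
  then have "U \<subseteq> {0}" "W \<subseteq> {0}" by (auto simp: fun_eq_iff)
  then have "card U \<le> 1" "card W \<le> 1"
    using card_mono[of "{0 :: nat \<Rightarrow> 'a}"] by simp_all
  then show ?case using mult_le_mono[of "card U" 1 "card W" 1] by simp
next
  case (insert m J)
  let ?q = "CARD('a)"
  define U' where "U' = keep_coords (- {m}) ` U"
  define W' where "W' = {w\<in>W. w m = 0}"
  define K where "K = {u\<in>U. \<forall>l. l \<noteq> m \<longrightarrow> u l = 0}"
  have IH: "card U' * card W' \<le> ?q ^ card J"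
  proof (rule insert.IH)
    show "fvec.subspace U'" "fvec.subspace W'"
      unfolding U'_def W'_def using subspace_vanishing_on[of W "\<lambda>l. l = m"] insert.prems
      by (simp_all add: subspace_keep_coords_image)
    show "finite U'" "finite W'" "\<forall>l\<in>J. y l \<noteq> 0"
      using insert.prems by (simp_all add: U'_def W'_def)
    show "\<forall>u\<in>U'. \<forall>l. l \<notin> J \<longrightarrow> u l = 0" "\<forall>w\<in>W'. \<forall>l. l \<notin> J \<longrightarrow> w l = 0"
      using insert.prems by (auto simp: U'_def W'_def keep_coords_def)
    show "\<forall>u'\<in>U'. \<forall>w\<in>W'. (\<Sum>l\<in>J. u' l * w l * y l) = 0"
    proof (intro ballI)
      fix u' w assume "u' \<in> U'" and w: "w \<in> W'"
      then obtain u where u: "u \<in> U" and u': "u' = keep_coords (- {m}) u"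
        by (auto simp: U'_def)
      have "(\<Sum>l\<in>J. u' l * w l * y l) = (\<Sum>l\<in>J. u l * w l * y l)"
        using insert.hyps by (intro sum.cong) (auto simp: u' keep_coords_def)
      also have "\<dots> = (\<Sum>l\<in>insert m J. u l * w l * y l)"
        using insert.hyps w by (simp add: W'_def)
      also have "\<dots> = 0"
        using insert.prems u w by (simp add: W'_def)
      finally show "(\<Sum>l\<in>J. u' l * w l * y l) = 0" .
    qed
  qed
  have card_U: "card U = card K * card U'"
    unfolding K_def U'_def using insert.prems
    by (subst card_eq_card_kernel_mult_card_image[where f = "keep_coords (- {m})"])
       (auto simp: fvec.subspace_0 fvec.subspace_diff keep_coords_diff keep_coords_eq_0_iff Ball_def)
  have card_W: "card W = card W' * card ((\<lambda>w. w m) ` W)"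
    unfolding W'_def using insert.prems
    by (intro card_eq_card_kernel_mult_card_image) (simp_all add: fvec.subspace_0 fvec.subspace_diff)
  have card_K_image: "card K * card ((\<lambda>w. w m) ` W) \<le> ?q"
    unfolding K_def using insert.hyps insert.prems
    by (intro card_point_supported_mult_card_coord_image_le[where I = "insert m J"]) simp_all
  have "card U * card W = (card K * card ((\<lambda>w. w m) ` W)) * (card U' * card W')"
    by (simp add: card_U card_W ac_simps)
  also have "\<dots> \<le> ?q * ?q ^ card J"
    using card_K_image IH by (rule mult_le_mono)
  also have "\<dots> = ?q ^ card (insert m J)"
    using insert.hyps by simp
  finally show ?case .
qed

lemma formally_self_orthogonalE:
  fixes C :: "(nat \<Rightarrow> 'a::field) set"
  assumes "formally_self_orthogonal n C"
  obtains y where "\<forall>l<n. y l \<noteq> 0" "\<forall>a\<in>C. \<forall>b\<in>C. (\<Sum>l<n. a l * b l * y l) = 0"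
proof -
  obtain x where x: "\<forall>l<n. x l \<noteq> 0" and C_dual: "C \<subseteq> (\<lambda>v l. x l * v l) ` dual_code n C"
    using assms unfolding formally_self_orthogonal_def by blast
  have "\<forall>a\<in>C. \<forall>b\<in>C. (\<Sum>l<n. a l * b l * inverse (x l)) = 0"
  proof (intro ballI)
    fix a b assume "a \<in> C" "b \<in> C"
    then obtain v where v: "v \<in> dual_code n C" "a = (\<lambda>l. x l * v l)" using C_dual by blast
    have "(\<Sum>l<n. a l * b l * inverse (x l)) = (\<Sum>l<n. v l * b l)"
      using x by (intro sum.cong) (auto simp: v(2))
    also have "\<dots> = 0" using v(1) \<open>b \<in> C\<close> by (simp add: dual_code_def)
    finally show "(\<Sum>l<n. a l * b l * inverse (x l)) = 0" .
  qed
  with x show ?thesis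
    using that[of "\<lambda>l. inverse (x l)"] by simp
qed

lemma subspace_prefix_code: "linear_code n C \<Longrightarrow> fvec.subspace (prefix_code n C k)"
  using subspace_vanishing_on[of C "\<lambda>l. k \<le> l"] by (simp add: prefix_code_def linear_code_def)

lemma subspace_suffix_subcode: "linear_code n C \<Longrightarrow> fvec.subspace {c\<in>C. \<forall>l<k. c l = 0}"
  using subspace_vanishing_on[of C "\<lambda>l. l < k"] by (simp add: linear_code_def)

lemma card_prefix_code:
  fixes C :: "(nat \<Rightarrow> 'a::{field,finite}) set"
  assumes "linear_code n C"
  shows "card (prefix_code n C k) = CARD('a) ^ p_dim n C k"
  unfolding p_dim_def cdim_def
  using assms finite_linear_code[OF assms]
  by (intro card_subspace subspace_prefix_code) (simp_all add: prefix_code_def)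

lemma card_suffix_subcode:
  fixes C :: "(nat \<Rightarrow> 'a::{field,finite}) set"
  assumes "linear_code n C"
  shows "card {c\<in>C. \<forall>l<k. c l = 0} = CARD('a) ^ f_dim n C k"
proof -
  define S where "S = {c\<in>C. \<forall>l<k. c l = 0}"
  define shift where "shift c = (\<lambda>j. c (j + k))" for c :: "nat \<Rightarrow> 'a"
  have suffix_eq: "suffix_code n C k = shift ` S"
    by (simp add: suffix_code_def shift_def S_def)
  have "fvec.subspace S" "finite S"
    using subspace_suffix_subcode[OF assms] finite_linear_code[OF assms] by (simp_all add: S_def)
  have "inj_on shift S"
  proof (rule inj_onI, rule ext)
    fix a b l assume "a \<in> S" "b \<in> S" "shift a = shift b"
    then show "a l = b l"
      by (cases "l < k") (auto simp: S_def shift_def fun_eq_iff dest: spec[where x = "l - k"])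
  qed
  then have "card S = card (suffix_code n C k)"
    by (simp add: suffix_eq card_image)
  also have "\<dots> = CARD('a) ^ f_dim n C k"
    unfolding f_dim_def cdim_def suffix_eq
  proof (rule card_subspace)
    show "fvec.subspace (shift ` S)"
      by (rule subspace_linear_image[OF \<open>fvec.subspace S\<close>]) (simp_all add: shift_def cscale_def fun_eq_iff)
    show "finite (shift ` S)"
      using \<open>finite S\<close> by simp
  qed
  finally show ?thesis by (simp add: S_def)
qed

lemma card_projected_prefix_suffix_le:
  fixes C :: "(nat \<Rightarrow> 'a::{field,finite}) set" and i j :: nat
  assumes code: "linear_code n C" and fso: "formally_self_orthogonal n C" and "j \<le> n"
  defines "\<pi> \<equiv> keep_coords {i..<j} :: (nat \<Rightarrow> 'a) \<Rightarrow> nat \<Rightarrow> 'a"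
  shows "card (\<pi> ` prefix_code n C j) * card (\<pi> ` {c\<in>C. \<forall>l<i. c l = 0}) \<le> CARD('a) ^ (j - i)"
proof -
  obtain y where y: "\<forall>l<n. y l \<noteq> 0" and orth: "\<forall>a\<in>C. \<forall>b\<in>C. (\<Sum>l<n. a l * b l * y l) = 0"
    using fso by (rule formally_self_orthogonalE)
  have "card (\<pi> ` prefix_code n C j) * card (\<pi> ` {c\<in>C. \<forall>l<i. c l = 0}) \<le> CARD('a) ^ card {i..<j}"
  proof (rule card_orthogonal_subspaces_le)
    show "\<forall>l\<in>{i..<j}. y l \<noteq> 0" using y \<open>j \<le> n\<close> by auto
    show "fvec.subspace (\<pi> ` prefix_code n C j)" "fvec.subspace (\<pi> ` {c\<in>C. \<forall>l<i. c l = 0})"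
      unfolding \<pi>_def using code
      by (simp_all add: subspace_keep_coords_image subspace_prefix_code subspace_suffix_subcode)
    show "finite (\<pi> ` prefix_code n C j)" "finite (\<pi> ` {c\<in>C. \<forall>l<i. c l = 0})"
      using finite_linear_code[OF code] by (simp_all add: prefix_code_def)
    show "\<forall>u\<in>\<pi> ` prefix_code n C j. \<forall>l. l \<notin> {i..<j} \<longrightarrow> u l = 0"
      "\<forall>w\<in>\<pi> ` {c\<in>C. \<forall>l<i. c l = 0}. \<forall>l. l \<notin> {i..<j} \<longrightarrow> w l = 0"
      by (auto simp: \<pi>_def keep_coords_def)
    show "\<forall>u\<in>\<pi> ` prefix_code n C j. \<forall>w\<in>\<pi> ` {c\<in>C. \<forall>l<i. c l = 0}.
        (\<Sum>l\<in>{i..<j}. u l * w l * y l) = 0"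
    proof clarify
      fix a b assume a: "a \<in> prefix_code n C j" and b: "b \<in> C" "\<forall>l<i. b l = 0"
      have "(\<Sum>l\<in>{i..<j}. \<pi> a l * \<pi> b l * y l) = (\<Sum>l<n. a l * b l * y l)"
      proof (rule sum.mono_neutral_cong_left)
        show "\<forall>l\<in>{..<n} - {i..<j}. a l * b l * y l = 0"
          using a b by (auto simp: prefix_code_def not_le)
      qed (use \<open>j \<le> n\<close> in \<open>auto simp: \<pi>_def keep_coords_def\<close>)
      also have "\<dots> = 0"
        using orth a b by (simp add: prefix_code_def)
      finally show "(\<Sum>l\<in>{i..<j}. \<pi> a l * \<pi> b l * y l) = 0" .
    qed
  qed simp
  then show ?thesis by simp
qed

lemma prefix_suffix_dim_le:
  fixes C :: "(nat \<Rightarrow> 'a::{field,finite}) set"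
  assumes code: "linear_code n C" and fso: "formally_self_orthogonal n C"
    and "i \<le> j" "j \<le> n"
  shows "p_dim n C j + f_dim n C i \<le> p_dim n C i + f_dim n C j + (j - i)"
proof -
  let ?q = "CARD('a)"
  define P where "P k = prefix_code n C k" for k
  define S where "S k = {c\<in>C. \<forall>l<k. c l = 0}" for k
  define \<pi> :: "(nat \<Rightarrow> 'a) \<Rightarrow> nat \<Rightarrow> 'a" where "\<pi> = keep_coords {i..<j}"
  have sub_P: "fvec.subspace (P k)" and sub_S: "fvec.subspace (S k)" for k
    using code by (simp_all add: P_def S_def subspace_prefix_code subspace_suffix_subcode)
  have fin_P: "finite (P k)" and fin_S: "finite (S k)" for k
    using finite_linear_code[OF code] by (simp_all add: P_def S_def prefix_code_def)
  have "{v\<in>P j. \<pi> v = 0} = P i"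
    using \<open>i \<le> j\<close> by (auto simp: P_def prefix_code_def \<pi>_def keep_coords_eq_0_iff)
  then have card_P: "card (P j) = card (P i) * card (\<pi> ` P j)"
    using fin_P sub_P card_eq_card_kernel_mult_card_image[of "P j" \<pi>]
    by (simp add: fvec.subspace_0 fvec.subspace_diff \<pi>_def keep_coords_diff)
  have "{v\<in>S i. \<pi> v = 0} = S j"
    using \<open>i \<le> j\<close> by (auto simp: S_def \<pi>_def keep_coords_eq_0_iff)
  then have card_S: "card (S i) = card (S j) * card (\<pi> ` S i)"
    using fin_S sub_S card_eq_card_kernel_mult_card_image[of "S i" \<pi>]
    by (simp add: fvec.subspace_0 fvec.subspace_diff \<pi>_def keep_coords_diff)
  have "?q ^ (p_dim n C j + f_dim n C i) = card (P j) * card (S i)"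
    using card_prefix_code[OF code] card_suffix_subcode[OF code] by (simp add: P_def S_def power_add)
  also have "\<dots> = card (P i) * card (S j) * (card (\<pi> ` P j) * card (\<pi> ` S i))"
    by (simp add: card_P card_S ac_simps)
  also have "\<dots> \<le> card (P i) * card (S j) * ?q ^ (j - i)"
    using card_projected_prefix_suffix_le[OF code fso \<open>j \<le> n\<close>, of i] by (simp add: P_def S_def \<pi>_def)
  also have "\<dots> = ?q ^ (p_dim n C i + f_dim n C j + (j - i))"
    using card_prefix_code[OF code] card_suffix_subcode[OF code] by (simp add: P_def S_def power_add)
  finally show ?thesis
    using card_field_ge_2[where 'a = 'a] by (simp add: power_le_imp_le_exp)
qed

lemma cdim_eq_0: "S \<subseteq> {0} \<Longrightarrow> cdim S = 0"
  unfolding cdim_def by (rule fvec.dim_unique[of "{}"]) (simp_all add: fvec.independent_empty)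

lemma weight_le_card: "{l. l < n \<and> c l \<noteq> 0} \<subseteq> A \<Longrightarrow> finite A \<Longrightarrow> weight n c \<le> card A"
  unfolding weight_def by (rule card_mono)

lemma p_dim_eq_0:
  assumes "\<forall>c\<in>C. c \<noteq> 0 \<longrightarrow> d \<le> weight n c" "k < d"
  shows "p_dim n C k = 0"
  unfolding p_dim_def
proof (rule cdim_eq_0, rule subsetI)
  fix c assume c: "c \<in> prefix_code n C k"
  then have "weight n c \<le> card {..<k}"
    by (intro weight_le_card) (auto simp: prefix_code_def not_less[symmetric])
  then show "c \<in> {0}"
    using assms c by (auto simp: prefix_code_def)
qed

lemma f_dim_eq_0:
  assumes "\<forall>c\<in>C. c \<noteq> 0 \<longrightarrow> d \<le> weight n c" "k \<le> n" "n < k + d"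
  shows "f_dim n C k = 0"
  unfolding f_dim_def
proof (rule cdim_eq_0, rule subsetI)
  fix c' assume "c' \<in> suffix_code n C k"
  then obtain c where c: "c \<in> C" "\<forall>l<k. c l = 0" and c': "c' = (\<lambda>l. c (l + k))"
    by (auto simp: suffix_code_def)
  have "weight n c \<le> card {k..<n}"
    using c by (intro weight_le_card) (auto simp: not_le[symmetric])
  then have "\<not> d \<le> weight n c"
    using assms(2,3) by simp
  then have "c = 0"
    using assms(1) c(1) by blast
  then show "c' \<in> {0}"
    by (simp add: c' fun_eq_iff)
qed

lemma Delta_le_dims: "i \<le> n \<Longrightarrow> Delta n C \<le> p_dim n C i + f_dim n C i"
  unfolding Delta_def by (rule Min_le) auto

lemma Delta_le_min_weight:
  fixes C :: "(nat \<Rightarrow> 'a::{field,finite}) set"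
  assumes code: "linear_code n C" and fso: "formally_self_orthogonal n C"
    and weight: "\<forall>c\<in>C. c \<noteq> 0 \<longrightarrow> d \<le> weight n c" and "1 \<le> d" "2 * d \<le> n + 1"
  shows "2 * Delta n C + 2 * d \<le> n + 2"
proof -
  define i where "i = d - 1"
  define j where "j = n + 1 - d"
  have "i \<le> j" "j \<le> n"
    using assms by (auto simp: i_def j_def)
  have "p_dim n C i = 0" "f_dim n C j = 0"
    using assms by (auto simp: i_def j_def intro: p_dim_eq_0[OF weight] f_dim_eq_0[OF weight])
  moreover have "p_dim n C j + f_dim n C i \<le> p_dim n C i + f_dim n C j + (j - i)"
    using code fso \<open>i \<le> j\<close> \<open>j \<le> n\<close> by (rule prefix_suffix_dim_le)
  moreover have "Delta n C \<le> p_dim n C i + f_dim n C i" "Delta n C \<le> p_dim n C j + f_dim n C j"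
    using \<open>i \<le> j\<close> \<open>j \<le> n\<close> by (simp_all add: Delta_le_dims)
  ultimately show ?thesis
    using assms by (simp add: i_def j_def)
qed

lemma weight_pos:
  assumes "c \<in> words n" "c \<noteq> 0"
  shows "0 < weight n c"
proof -
  obtain l where "c l \<noteq> 0"
    using assms(2) by (auto simp: fun_eq_iff)
  moreover from this have "l < n"
    using assms(1) unfolding words_def by (cases "l < n") auto
  ultimately show ?thesis
    unfolding weight_def by (auto simp: card_gt_0_iff)
qed

lemma finite_weights: "finite C \<Longrightarrow> finite {weight n c | c. c \<in> C \<and> c \<noteq> 0}"
  by (rule finite_image_set) simp

lemma min_dist_le_weight: "finite C \<Longrightarrow> c \<in> C \<Longrightarrow> c \<noteq> 0 \<Longrightarrow> min_dist n C \<le> weight n c"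
  unfolding min_dist_def by (rule Min_le) (auto simp: finite_weights)

lemma min_dist_pos:
  fixes C :: "(nat \<Rightarrow> 'a::{field,finite}) set"
  assumes "linear_code n C" "C \<noteq> {0}"
  shows "0 < min_dist n C"
proof -
  have "C \<subseteq> words n" "finite C" "0 \<in> C"
    using assms(1) finite_linear_code fvec.subspace_0 by (auto simp: linear_code_def)
  then have "min_dist n C \<in> {weight n c | c. c \<in> C \<and> c \<noteq> 0}"
    unfolding min_dist_def using assms(2) by (intro Min_in finite_weights) auto
  then obtain c where "c \<in> C" "c \<noteq> 0" "min_dist n C = weight n c"
    by blast
  then show ?thesis
    using \<open>C \<subseteq> words n\<close> weight_pos[of c n] by auto
qed

lemma weight_permute:
  assumes "\<sigma> permutes {0..<n}"
  shows "weight n (c \<circ> \<sigma>) = weight n c"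
proof -
  have in_range: "\<sigma> l < n \<longleftrightarrow> l < n" for l
    using permutes_in_image[OF assms] by simp
  have image_eq: "\<sigma> ` {l. l < n \<and> c (\<sigma> l) \<noteq> 0} = {l. l < n \<and> c l \<noteq> 0}"
  proof
    show "{l. l < n \<and> c l \<noteq> 0} \<subseteq> \<sigma> ` {l. l < n \<and> c (\<sigma> l) \<noteq> 0}"
    proof clarify
      fix l assume "l < n" "c l \<noteq> 0"
      then show "l \<in> \<sigma> ` {l. l < n \<and> c (\<sigma> l) \<noteq> 0}"
        using in_range[of "inv \<sigma> l"] permutes_inverses(1)[OF assms]
        by (intro image_eqI[where x = "inv \<sigma> l"]) auto
    qed
  qed (auto simp: in_range)
  have "inj_on \<sigma> {l. l < n \<and> c (\<sigma> l) \<noteq> 0}"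
    using permutes_inj_on[OF assms] by blast
  from card_image[OF this] show ?thesis
    unfolding weight_def image_eq by simp
qed

lemma sum_permute_lessThan:
  fixes n :: nat
  assumes "\<sigma> permutes {0..<n}"
  shows "(\<Sum>l<n. g (\<sigma> l)) = (\<Sum>l<n. g l)"
proof -
  have "\<sigma> permutes {..<n}"
    using assms by (simp add: atLeast0LessThan)
  from sum.permute[OF this, of g] show ?thesis
    by (simp add: comp_def)
qed

lemma linear_code_permute_code:
  assumes "linear_code n C" "\<sigma> permutes {0..<n}"
  shows "linear_code n (permute_code \<sigma> C)"
  unfolding linear_code_def
proof
  show "permute_code \<sigma> C \<subseteq> words n"
    using assms permutes_not_in[OF assms(2)]
    by (auto simp: permute_code_def linear_code_def words_def subset_iff)
  show "fvec.subspace (permute_code \<sigma> C)"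
    unfolding permute_code_def using assms(1)
    by (intro subspace_linear_image) (auto simp: linear_code_def cscale_def fun_eq_iff)
qed

lemma formally_self_orthogonal_permute_code:
  assumes "formally_self_orthogonal n C" "\<sigma> permutes {0..<n}"
  shows "formally_self_orthogonal n (permute_code \<sigma> C)"
proof -
  obtain x where x: "\<forall>l<n. x l \<noteq> 0" and C_dual: "C \<subseteq> (\<lambda>v l. x l * v l) ` dual_code n C"
    using assms(1) unfolding formally_self_orthogonal_def by blast
  have in_range: "\<sigma> l < n \<longleftrightarrow> l < n" for l
    using permutes_in_image[OF assms(2)] by simp
  have dual: "v \<circ> \<sigma> \<in> dual_code n (permute_code \<sigma> C)" if v: "v \<in> dual_code n C" for v
  proof -
    have "v \<circ> \<sigma> \<in> words n"
      using v permutes_not_in[OF assms(2)] by (simp add: dual_code_def words_def)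
    moreover have "(\<Sum>l<n. (v \<circ> \<sigma>) l * (c \<circ> \<sigma>) l) = 0" if "c \<in> C" for c
      using v that sum_permute_lessThan[OF assms(2), of "\<lambda>l. v l * c l"]
      by (simp add: dual_code_def)
    ultimately show ?thesis
      by (auto simp: dual_code_def permute_code_def)
  qed
  show ?thesis
    unfolding formally_self_orthogonal_def
  proof (intro exI[of _ "x \<circ> \<sigma>"] conjI allI impI subsetI)
    show "(x \<circ> \<sigma>) l \<noteq> 0" if "l < n" for l
      using x that in_range by simp
    fix c' assume "c' \<in> permute_code \<sigma> C"
    then obtain v where "v \<in> dual_code n C" "c' = (\<lambda>l. x l * v l) \<circ> \<sigma>"
      using C_dual by (auto simp: permute_code_def)
    then show "c' \<in> (\<lambda>v l. (x \<circ> \<sigma>) l * v l) ` dual_code n (permute_code \<sigma> C)"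
      using dual by (intro image_eqI[where x = "v \<circ> \<sigma>"]) auto
  qed
qed

lemma weight_bound_permute_code:
  assumes "\<sigma> permutes {0..<n}" "\<forall>c\<in>C. c \<noteq> 0 \<longrightarrow> d \<le> weight n c"
  shows "\<forall>c\<in>permute_code \<sigma> C. c \<noteq> 0 \<longrightarrow> d \<le> weight n c"
proof (intro ballI impI)
  fix c' assume "c' \<in> permute_code \<sigma> C" "c' \<noteq> 0"
  then obtain c where "c \<in> C" "c' = c \<circ> \<sigma>"
    by (auto simp: permute_code_def)
  moreover from this have "c \<noteq> 0"
    using \<open>c' \<noteq> 0\<close> by auto
  ultimately show "d \<le> weight n c'"
    using assms by (simp add: weight_permute)
qed

lemma Delta_perm_attained:
  "\<exists>\<sigma>. \<sigma> permutes {0..<n} \<and> Delta_perm n C = Delta n (permute_code \<sigma> C)"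
proof -
  have "Delta_perm n C \<in> {Delta n (permute_code \<sigma> C) | \<sigma>. \<sigma> permutes {0..<n}}"
    unfolding Delta_perm_def
    by (rule Max_in) (auto intro: finite_image_set finite_permutations permutes_id)
  then show ?thesis by blast
qed

theorem proposition4p4:
  fixes C :: "(nat \<Rightarrow> 'a::{field,finite}) set" and n d :: nat
  assumes "linear_code n C"
    and "formally_self_orthogonal n C"
    and "C \<noteq> {0}"
    and "d = min_dist n C"
    and "2 * d \<le> n + 1"
  shows "(\<forall>i j. i \<le> j \<and> j \<le> n \<longrightarrow>
            (int (p_dim n C j) - int (p_dim n C i)) + (int (f_dim n C i) - int (f_dim n C j))
              \<le> int j - int i)
         \<and> int (Delta_perm n C) \<le> (int n - 2 * int d + 2) div 2"
proof -
  have "1 \<le> d"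
    using min_dist_pos[OF assms(1,3)] assms(4) by simp
  have weight: "\<forall>c\<in>C. c \<noteq> 0 \<longrightarrow> d \<le> weight n c"
    using assms(4) min_dist_le_weight finite_linear_code[OF assms(1)] by blast
  obtain \<sigma> where \<sigma>: "\<sigma> permutes {0..<n}" "Delta_perm n C = Delta n (permute_code \<sigma> C)"
    using Delta_perm_attained by blast
  have "2 * Delta_perm n C + 2 * d \<le> n + 2"
    unfolding \<sigma>(2)
    using linear_code_permute_code[OF assms(1) \<sigma>(1)] formally_self_orthogonal_permute_code[OF assms(2) \<sigma>(1)]
      weight_bound_permute_code[OF \<sigma>(1) weight] \<open>1 \<le> d\<close> assms(5)
    by (rule Delta_le_min_weight)
  then have "2 * int (Delta_perm n C) \<le> int n - 2 * int d + 2"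
    by linarith
  then have "int (Delta_perm n C) \<le> (int n - 2 * int d + 2) div 2"
    using zdiv_mono1[of "2 * int (Delta_perm n C)" _ 2] by simp
  moreover have "(int (p_dim n C j) - int (p_dim n C i)) + (int (f_dim n C i) - int (f_dim n C j))
      \<le> int j - int i" if "i \<le> j" "j \<le> n" for i j
    using prefix_suffix_dim_le[OF assms(1,2) that] that by (simp add: of_nat_diff)
  ultimately show ?thesis
    by blast
qed

end
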